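(* Let $(\mathcal{X},\rho)$ be a metric space, let $(x_1,y_1),\dots,(x_n,y_n)\in\mathcal{X}\times\{-1,1\}$, and let $L>0$. Define $k(L)$ as the minimum, over all $f:\mathcal{X}\to\mathbb{R}$ with Lipschitz constant at most $L$, of $|\{i\in[n]: y_if(x_i)<1\}|$. Let $G_L$ be the bipartite graph with vertex set $[n]$, parts $\{i:y_i=1\}$ and $\{i:y_i=-1\}$, and an edge $\{i,j\}$ whenever $y_i=1$, $y_j=-1$ and $\rho(x_i,x_j)<2/L$. Then $k(L)$ equals the size of a minimum vertex cover of $G_L$ (equivalently, by König's theorem, the size of a maximum matching of $G_L$).
   Context: The Lipschitz constant of $f$ is the smallest $L\ge0$ with $|f(x)-f(x')|\le L\rho(x,x')$ for all $x,x'$. A vertex cover of a graph is a set of vertices meeting every edge. *)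

theory Defs
  imports "HOL-Analysis.Analysis"
begin

definition margin_errors :: "nat \<Rightarrow> (nat \<Rightarrow> 'a) \<Rightarrow> (nat \<Rightarrow> real) \<Rightarrow> ('a \<Rightarrow> real) \<Rightarrow> nat" where
  "margin_errors n x y f = card {i \<in> {1..n}. y i * f (x i) < 1}"

definition kL :: "nat \<Rightarrow> (nat \<Rightarrow> 'a::metric_space) \<Rightarrow> (nat \<Rightarrow> real) \<Rightarrow> real \<Rightarrow> nat" where
  "kL n x y L = Min {margin_errors n x y f | f :: 'a \<Rightarrow> real. L-lipschitz_on UNIV f}"

definition GL_edge :: "(nat \<Rightarrow> 'a::metric_space) \<Rightarrow> (nat \<Rightarrow> real) \<Rightarrow> real \<Rightarrow> nat \<Rightarrow> nat \<Rightarrow> bool" where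
  "GL_edge x y L i j \<longleftrightarrow> y i = 1 \<and> y j = -1 \<and> dist (x i) (x j) < 2 / L"

definition is_vertex_cover :: "nat set \<Rightarrow> (nat \<Rightarrow> nat \<Rightarrow> bool) \<Rightarrow> nat set \<Rightarrow> bool" where
  "is_vertex_cover V E C \<longleftrightarrow> C \<subseteq> V \<and> (\<forall>i\<in>V. \<forall>j\<in>V. E i j \<longrightarrow> i \<in> C \<or> j \<in> C)"

definition min_vertex_cover_size :: "nat set \<Rightarrow> (nat \<Rightarrow> nat \<Rightarrow> bool) \<Rightarrow> nat" where
  "min_vertex_cover_size V E = Min {card C | C. is_vertex_cover V E C}"

end

theory Submission
  imports Defs
begin

text \<open>An L-Lipschitz function with margin errors on a set E of indices makes E a vertex
  cover of G_L: a positive and a negative point at distance less than 2/L cannot both be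
  classified with margin 1, since f would have to drop by 2 between them. Conversely, given
  a vertex cover C, the function min 1 (L \<cdot> infdist z N - 1), where N consists of the negative
  points outside C, is L-Lipschitz, equals -1 on N and equals 1 on every positive point outside C
  (no edge joins it to N, so it is at distance at least 2/L from N); its margin errors lie in C.
  Hence both minima range over mutually dominating sets and coincide.\<close>

lemma Min_eq_if_mutually_dominated:
  fixes A B :: "'a::linorder set"
  assumes "finite A" "finite B" "A \<noteq> {}" "B \<noteq> {}"
    and "\<And>a. a \<in> A \<Longrightarrow> \<exists>b\<in>B. b \<le> a"
    and "\<And>b. b \<in> B \<Longrightarrow> \<exists>a\<in>A. a \<le> b"
  shows "Min A = Min B"
proof (rule antisym)
  obtain a where "a \<in> A" "a \<le> Min B"
    using assms(6)[OF Min_in[OF assms(2,4)]] by blast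
  then show "Min A \<le> Min B"
    using Min_le[OF assms(1)] order.trans by blast
next
  obtain b where "b \<in> B" "b \<le> Min A"
    using assms(5)[OF Min_in[OF assms(1,3)]] by blast
  then show "Min B \<le> Min A"
    using Min_le[OF assms(2)] order.trans by blast
qed

lemma lipschitz_on_infdist: "1-lipschitz_on U (\<lambda>z. infdist z A)"
  by (rule lipschitz_onI) (auto simp: dist_real_def infdist_triangle_abs)

lemma lipschitz_on_min_const:
  fixes f :: "'a::metric_space \<Rightarrow> real"
  assumes "L-lipschitz_on U f"
  shows "L-lipschitz_on U (\<lambda>z. min c (f z))"
proof (rule lipschitz_onI)
  fix u v assume "u \<in> U" "v \<in> U"
  then have "\<bar>f u - f v\<bar> \<le> L * dist u v"
    using lipschitz_onD[OF assms] by (simp add: dist_real_def)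
  then show "dist (min c (f u)) (min c (f v)) \<le> L * dist u v"
    by (simp add: dist_real_def abs_le_iff min_def)
qed (rule lipschitz_on_nonneg[OF assms])

lemma lipschitz_gap_dist:
  fixes f :: "'a::metric_space \<Rightarrow> real"
  assumes "L > 0" "L-lipschitz_on UNIV f" "f u \<ge> 1" "f v \<le> -1"
  shows "2 / L \<le> dist u v"
proof -
  have "2 \<le> dist (f u) (f v)"
    using assms(3,4) by (simp add: dist_real_def)
  also have "\<dots> \<le> L * dist u v"
    using lipschitz_onD[OF assms(2)] by simp
  finally show ?thesis
    using assms(1) by (simp add: divide_le_eq mult.commute)
qed

lemma lipschitz_separator_exists:
  fixes A :: "'a::metric_space set"
  assumes "L > 0"
  obtains f :: "'a \<Rightarrow> real" where "L-lipschitz_on UNIV f"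
    and "\<And>a. a \<in> A \<Longrightarrow> f a = -1"
    and "\<And>z. (\<And>a. a \<in> A \<Longrightarrow> 2 / L \<le> dist z a) \<Longrightarrow> f z = 1"
proof (cases "A = {}")
  case True
  then show ?thesis
    using that[of "\<lambda>_. 1"] assms by (simp add: lipschitz_on_def)
next
  case False
  define f where "f z = min 1 (L * infdist z A - 1)" for z
  have "(L * 1 + 0)-lipschitz_on UNIV (\<lambda>z. L * infdist z A - 1)"
    using assms by (intro lipschitz_on_diff lipschitz_on_cmult_real_nonneg lipschitz_on_infdist
        lipschitz_on_constant) auto
  then have "L-lipschitz_on UNIV f"
    unfolding f_def by (simp add: lipschitz_on_min_const)
  moreover have "f z = 1" if "\<And>a. a \<in> A \<Longrightarrow> 2 / L \<le> dist z a" for z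
  proof -
    have "2 / L \<le> infdist z A"
      using False that unfolding infdist_def by (auto intro!: cINF_greatest)
    then have "2 \<le> L * infdist z A"
      using assms by (simp add: divide_le_eq mult.commute)
    then show ?thesis by (simp add: f_def)
  qed
  ultimately show ?thesis
    using that[of f] by (simp add: f_def)
qed

lemma margin_errors_le: "margin_errors n x y f \<le> n"
proof -
  have "card {i \<in> {1..n}. y i * f (x i) < 1} \<le> card {1..n}"
    by (rule card_mono) auto
  then show ?thesis by (simp add: margin_errors_def)
qed

lemma card_vertex_cover_le:
  assumes "is_vertex_cover V E C" "finite V"
  shows "card C \<le> card V"
  using assms card_mono unfolding is_vertex_cover_def by blast

lemma margin_error_set_is_vertex_cover:
  fixes f :: "'a::metric_space \<Rightarrow> real"
  assumes "L > 0" "L-lipschitz_on UNIV f"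
  shows "is_vertex_cover {1..n} (GL_edge x y L) {i \<in> {1..n}. y i * f (x i) < 1}"
  unfolding is_vertex_cover_def
proof (intro conjI ballI impI)
  fix i j assume "i \<in> {1..n}" "j \<in> {1..n}" "GL_edge x y L i j"
  moreover have "\<not> (f (x i) \<ge> 1 \<and> f (x j) \<le> -1)" if "dist (x i) (x j) < 2 / L"
    using lipschitz_gap_dist[OF assms] that by fastforce
  ultimately show "i \<in> {i \<in> {1..n}. y i * f (x i) < 1} \<or> j \<in> {i \<in> {1..n}. y i * f (x i) < 1}"
    unfolding GL_edge_def by auto
qed auto

lemma lipschitz_margin_errors_le_vertex_cover:
  fixes x :: "nat \<Rightarrow> 'a::metric_space"
  assumes labels: "\<forall>i\<in>{1..n}. y i = 1 \<or> y i = -1" and "L > 0"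
    and cover: "is_vertex_cover {1..n} (GL_edge x y L) C"
  obtains f :: "'a \<Rightarrow> real" where "L-lipschitz_on UNIV f" "margin_errors n x y f \<le> card C"
proof -
  define N where "N = x ` {j \<in> {1..n} - C. y j = -1}"
  obtain f :: "'a \<Rightarrow> real" where lip: "L-lipschitz_on UNIV f"
    and neg: "\<And>a. a \<in> N \<Longrightarrow> f a = -1"
    and pos: "\<And>z. (\<And>a. a \<in> N \<Longrightarrow> 2 / L \<le> dist z a) \<Longrightarrow> f z = 1"
    using lipschitz_separator_exists[OF \<open>L > 0\<close>] by blast
  have "i \<in> C" if i: "i \<in> {1..n}" "y i * f (x i) < 1" for i
  proof (rule ccontr)
    assume "i \<notin> C"
    consider "y i = 1" | "y i = -1" using labels i(1) by blast
    then show False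
    proof cases
      case 1
      have "2 / L \<le> dist (x i) a" if "a \<in> N" for a
      proof -
        obtain j where j: "j \<in> {1..n}" "j \<notin> C" "y j = -1" "a = x j"
          using \<open>a \<in> N\<close> unfolding N_def by auto
        then have "\<not> GL_edge x y L i j"
          using cover \<open>i \<notin> C\<close> i(1) unfolding is_vertex_cover_def by blast
        then show ?thesis using 1 j unfolding GL_edge_def by auto
      qed
      then show False using pos 1 i by fastforce
    next
      case 2
      then have "x i \<in> N" using i \<open>i \<notin> C\<close> unfolding N_def by auto
      then show False using neg 2 i by fastforce
    qed
  qed
  then have "margin_errors n x y f \<le> card C"
    unfolding margin_errors_def
    using cover by (intro card_mono) (auto simp: is_vertex_cover_def intro: finite_subset)
  then show ?thesis using that lip by blast
qed

theorem mainTheorem7: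
  fixes x :: "nat \<Rightarrow> 'a::metric_space" and y :: "nat \<Rightarrow> real" and n :: nat and L :: real
  assumes "\<forall>i\<in>{1..n}. y i = 1 \<or> y i = -1"
    and "L > 0"
  shows "kL n x y L = min_vertex_cover_size {1..n} (GL_edge x y L)"
proof -
  let ?S = "{margin_errors n x y f | f :: 'a \<Rightarrow> real. L-lipschitz_on UNIV f}"
  let ?T = "{card C | C. is_vertex_cover {1..n} (GL_edge x y L) C}"
  have "?S \<subseteq> {..n}" "?T \<subseteq> {..n}"
    using margin_errors_le card_vertex_cover_le[of "{1..n}"] by fastforce+
  then have "finite ?S" "finite ?T"
    by (auto intro: finite_subset)
  moreover have "(\<lambda>_. 0) \<in> {f :: 'a \<Rightarrow> real. L-lipschitz_on UNIV f}"
    using assms(2) by (simp add: lipschitz_on_def)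
  then have "?S \<noteq> {}" by blast
  moreover have "is_vertex_cover {1..n} (GL_edge x y L) {1..n}"
    by (simp add: is_vertex_cover_def)
  then have "?T \<noteq> {}" by blast
  moreover have "\<exists>b\<in>?T. b \<le> a" if "a \<in> ?S" for a
    using that margin_error_set_is_vertex_cover[OF assms(2)]
    unfolding margin_errors_def by blast
  moreover have "\<exists>a\<in>?S. a \<le> b" if "b \<in> ?T" for b
    using that lipschitz_margin_errors_le_vertex_cover[OF assms] by blast
  ultimately show ?thesis
    unfolding kL_def min_vertex_cover_size_def by (rule Min_eq_if_mutually_dominated)
qed

end
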